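(* Let $\delta\le10^{-7}$ be the deletion probability, let $m>n$, $w=10000\log m$, and $d=10\frac{\log m}{\log(1/\delta)}$. Let $X$ be a set of $m^2$ independent traces of a string $S=p_1,\ldots,p_n$, and for each $x\in X$ let $i_x$ be uniform in $\{1,\ldots,n-3w+1\}$, $L_x=x_{i_x},\ldots,x_{i_x+w-1}$ and $R_x=x_{i_x+2w},\ldots,x_{i_x+3w-1}$. Then with probability at least $1-O(m^{-0.2})$, no $x\in X$ has more than $d$ deletions within $L_x$ or within $R_x$.
   Context: A trace is generated from $S$ by sampling independent bits $t_k$ with $\Pr[t_k=1]=p_k$, deleting each independently with probability $\delta$, and concatenating survivors. For a block of $w$ consecutive trace bits originating from original positions $a_1<\cdots<a_w$, the number of deletions within the block is $(a_w-a_1+1)-w$, the number of original positions between its first and last bits that were deleted. $\log$ denotes the natural logarithm. *)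

theory Defs
  imports "HOL-Probability.Probability"
begin

text \<open>Original string S = p_1..p_n is given by p :: nat => real on positions 1..n.
  A trace sample is a pair (t, del): t k is the sampled bit at original position k
  (Pr[t k] = p k), del k says whether position k is deleted (Pr = delta).\<close>

definition trace_pmf :: "(nat \<Rightarrow> real) \<Rightarrow> real \<Rightarrow> nat \<Rightarrow> ((nat \<Rightarrow> bool) \<times> (nat \<Rightarrow> bool)) pmf" where
  "trace_pmf p \<delta> n =
     pair_pmf (Pi_pmf {1..n} False (\<lambda>k. bernoulli_pmf (p k)))
              (Pi_pmf {1..n} False (\<lambda>k. bernoulli_pmf \<delta>))"

text \<open>Original positions of the surviving bits, in increasing order; the j-th trace bit
  (1-based) originates from position (kept_positions n del) ! (j-1).\<close>
definition kept_positions :: "nat \<Rightarrow> (nat \<Rightarrow> bool) \<Rightarrow> nat list" where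
  "kept_positions n del = filter (\<lambda>k. \<not> del k) [1..<n+1]"

definition trace_string :: "nat \<Rightarrow> (nat \<Rightarrow> bool) \<times> (nat \<Rightarrow> bool) \<Rightarrow> bool list" where
  "trace_string n s = map (fst s) (kept_positions n (snd s))"

text \<open>Number of deletions within the block of w consecutive trace bits starting at trace
  position i (1-based): the number of deleted original positions between the origins of the
  first and last bit of the block, i.e. (a_w - a_1 + 1) - w.  If the trace is too short,
  the block is truncated at the end of the trace (and is empty if i exceeds its length).\<close>
definition block_deletions :: "nat \<Rightarrow> (nat \<Rightarrow> bool) \<Rightarrow> nat \<Rightarrow> nat \<Rightarrow> nat" where
  "block_deletions n del i w =
     (let ps = kept_positions n del in
      if w = 0 \<or> i = 0 \<or> i > length ps then 0
      else (let a1 = ps ! (i - 1); aw = ps ! (min (i + w - 1) (length ps) - 1)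
            in card {k. a1 \<le> k \<and> k \<le> aw \<and> del k}))"

definition trace_experiment :: "(nat \<Rightarrow> real) \<Rightarrow> real \<Rightarrow> nat \<Rightarrow> nat \<Rightarrow> nat \<Rightarrow>
    (nat \<Rightarrow> ((nat \<Rightarrow> bool) \<times> (nat \<Rightarrow> bool)) \<times> nat) pmf" where
  "trace_experiment p \<delta> n m w =
     Pi_pmf {..<m^2} undefined (\<lambda>_. pair_pmf (trace_pmf p \<delta> n) (pmf_of_set {1..n - 3*w + 1}))"

end

theory Submission
  imports Defs
begin

text \<open>If a block of \<open>w\<close> consecutive trace bits spans at least \<open>D\<close> deletions, then some window
  of \<open>w + D\<close> consecutive original positions contains \<open>D\<close> deleted positions. A fixed set of \<open>D\<close>
  positions is deleted with probability \<open>\<delta>^D\<close>, so a union bound over the \<open>m^2\<close> traces, the \<open>n\<close>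
  window starts and the \<open>(w + D) choose D\<close> subsets bounds the failure probability by
  \<open>m^3 (e (w + D) \<delta> / D)^D\<close>. Taking \<open>D = \<lfloor>d\<rfloor> + 1\<close> with \<open>d = 10 ln m / ln (1/\<delta>)\<close>, we have
  \<open>(w + D) / D = O(ln (1/\<delta>))\<close>, so for \<open>\<delta> \<le> 10^-7\<close> the base is at most \<open>\<delta>^0.32\<close> and the bound
  is at most \<open>m^3 \<delta>^(0.32 d) = m^3 m^-3.2\<close>. The bound holds whatever the distribution of the
  block starts.\<close>

lemma sorted_kept_positions: "sorted_wrt (<) (kept_positions n del)"
  unfolding kept_positions_def by (rule sorted_wrt_filter, rule sorted_wrt_upt)

lemma set_kept_positions: "set (kept_positions n del) = {k. 1 \<le> k \<and> k \<le> n \<and> \<not> del k}"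
  unfolding kept_positions_def by auto

lemma card_kept_between_le:
  fixes n :: nat and del :: "nat \<Rightarrow> bool"
  defines "ps \<equiv> kept_positions n del"
  assumes "i \<le> j" "j < length ps"
  shows "card {k. ps ! i \<le> k \<and> k \<le> ps ! j \<and> \<not> del k} \<le> Suc j - i"
proof -
  have "{k. ps ! i \<le> k \<and> k \<le> ps ! j \<and> \<not> del k} \<subseteq> (!) ps ` {i..j}"
  proof
    fix k assume k: "k \<in> {k. ps ! i \<le> k \<and> k \<le> ps ! j \<and> \<not> del k}"
    have "ps ! i \<in> set ps" "ps ! j \<in> set ps" using assms by auto
    with k have "k \<in> set ps" unfolding ps_def set_kept_positions by auto
    then obtain l where l: "l < length ps" "k = ps ! l" by (metis in_set_conv_nth)
    have sorted: "sorted_wrt (<) ps" unfolding ps_def by (rule sorted_kept_positions)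
    have "\<not> l < i" using sorted_wrt_nth_less[OF sorted, of l i] k l assms by auto
    moreover have "\<not> j < l" using sorted_wrt_nth_less[OF sorted, of j l] k l by auto
    ultimately show "k \<in> (!) ps ` {i..j}" using l by auto
  qed
  then have "card {k. ps ! i \<le> k \<and> k \<le> ps ! j \<and> \<not> del k} \<le> card ((!) ps ` {i..j})"
    by (intro card_mono) auto
  also have "\<dots> \<le> Suc j - i" using card_image_le[of "{i..j}" "(!) ps"] by simp
  finally show ?thesis .
qed

lemma deleted_subset_in_window:
  fixes del :: "nat \<Rightarrow> bool"
  assumes deleted: "D \<le> card {k. a \<le> k \<and> k \<le> b \<and> del k}"
    and kept: "card {k. a \<le> k \<and> k \<le> b \<and> \<not> del k} \<le> w"
  obtains T where "T \<subseteq> {a..<a+w+D} \<inter> {a..b}" "card T = D" "\<forall>k\<in>T. del k"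
proof -
  let ?W = "{a..<a+w+D} \<inter> {a..b}"
  have "D \<le> card (?W \<inter> {k. del k})"
  proof (cases "b < a + w + D")
    case True
    then have "?W \<inter> {k. del k} = {k. a \<le> k \<and> k \<le> b \<and> del k}" by auto
    with deleted show ?thesis by simp
  next
    case False
    then have window: "?W = {a..<a+w+D}" by auto
    have "finite {k. a \<le> k \<and> k \<le> b \<and> \<not> del k}"
      by (rule finite_subset[of _ "{a..b}"]) auto
    moreover have "?W - {k. del k} \<subseteq> {k. a \<le> k \<and> k \<le> b \<and> \<not> del k}" by auto
    ultimately have "card (?W - {k. del k}) \<le> w"
      using kept card_mono by (meson le_trans)
    moreover have "card ?W = w + D" unfolding window by simp
    ultimately show ?thesis using card_Int_Diff[of ?W "{k. del k}"] by simp
  qed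
  then obtain T where "T \<subseteq> ?W \<inter> {k. del k}" "card T = D"
    by (meson obtain_subset_with_card_n)
  then show thesis using that by blast
qed

lemma block_deletions_imp_deleted_window:
  assumes "D \<le> block_deletions n del i w" "1 \<le> D"
  obtains a T where "a \<in> {1..n}" "T \<subseteq> {a..<a+w+D} \<inter> {1..n}" "card T = D" "\<forall>k\<in>T. del k"
proof -
  define ps where "ps = kept_positions n del"
  define j where "j = min (i + w - 1) (length ps) - 1"
  have nondegenerate: "w \<noteq> 0" "i \<noteq> 0" "i \<le> length ps"
    using assms unfolding block_deletions_def ps_def Let_def by (auto split: if_splits)
  then have j: "i - 1 \<le> j" "j < length ps" "Suc j - (i - 1) \<le> w" unfolding j_def by auto
  have deleted: "D \<le> card {k. ps ! (i - 1) \<le> k \<and> k \<le> ps ! j \<and> del k}"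
    using assms(1) nondegenerate unfolding block_deletions_def ps_def j_def Let_def by simp
  have kept: "card {k. ps ! (i - 1) \<le> k \<and> k \<le> ps ! j \<and> \<not> del k} \<le> w"
    using card_kept_between_le[of "i - 1" j n del] j unfolding ps_def by linarith
  obtain T where T: "T \<subseteq> {ps ! (i - 1)..<ps ! (i - 1) + w + D} \<inter> {ps ! (i - 1)..ps ! j}"
    "card T = D" "\<forall>k\<in>T. del k"
    using deleted_subset_in_window[OF deleted kept] by blast
  have "ps ! (i - 1) \<in> set ps" "ps ! j \<in> set ps" using nondegenerate j by auto
  then have "ps ! (i - 1) \<in> {1..n}" "ps ! j \<in> {1..n}" unfolding ps_def set_kept_positions by auto
  with T show thesis using that by fastforce
qed

lemma card_subsets_of_window_le:
  "card {T. T \<subseteq> {a..<a+w+D} \<inter> A \<and> card T = D} \<le> (w + D) choose D"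
proof -
  have "card {T. T \<subseteq> {a..<a+w+D} \<inter> A \<and> card T = D} \<le> card {T. T \<subseteq> {a..<a+w+D} \<and> card T = D}"
    by (rule card_mono) (auto intro: finite_subset[of _ "Pow {a..<a+w+D}"])
  also have "\<dots> = (w + D) choose D" by (subst n_subsets) auto
  finally show ?thesis .
qed

lemma prob_trace_pmf_all_deleted:
  assumes "T \<subseteq> {1..n}" "0 \<le> \<delta>" "\<delta> \<le> 1"
  shows "measure_pmf.prob (trace_pmf p \<delta> n) {s. \<forall>k\<in>T. snd s k} = \<delta> ^ card T"
proof -
  let ?X = "Pi {1..n} (\<lambda>k. if k \<in> T then {True} else UNIV)"
  have event: "{s. \<forall>k\<in>T. snd s k} = snd -` ?X"
    using assms(1) by (auto simp: Pi_def split: if_splits)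
  have "measure_pmf.prob (trace_pmf p \<delta> n) {s. \<forall>k\<in>T. snd s k}
      = measure_pmf.prob (map_pmf snd (trace_pmf p \<delta> n)) ?X"
    unfolding event measure_map_pmf ..
  also have "map_pmf snd (trace_pmf p \<delta> n) = Pi_pmf {1..n} False (\<lambda>k. bernoulli_pmf \<delta>)"
    by (simp add: trace_pmf_def map_snd_pair_pmf)
  also have "measure_pmf.prob \<dots> ?X
      = (\<Prod>k\<in>{1..n}. measure_pmf.prob (bernoulli_pmf \<delta>) (if k \<in> T then {True} else UNIV))"
    by (rule measure_Pi_pmf_Pi) simp
  also have "\<dots> = (\<Prod>k\<in>{1..n}. if k \<in> T then \<delta> else 1)"
    using assms(2,3) by (intro prod.cong) (auto simp: measure_pmf_single)
  also have "\<dots> = \<delta> ^ card T"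
    using assms(1) by (simp add: prod.If_cases Int_absorb1)
  finally show ?thesis .
qed

lemma prob_trace_block_deletions_ge:
  assumes "1 \<le> D" "0 \<le> \<delta>" "\<delta> \<le> 1"
  shows "measure_pmf.prob (trace_pmf p \<delta> n) {s. \<exists>i. D \<le> block_deletions n (snd s) i w}
           \<le> real n * real ((w + D) choose D) * \<delta> ^ D"
proof -
  define windows where "windows a = {T. T \<subseteq> {a..<a+w+D} \<inter> {1..n} \<and> card T = D}" for a
  define all_deleted where
    "all_deleted T = {s :: (nat \<Rightarrow> bool) \<times> (nat \<Rightarrow> bool). \<forall>k\<in>T. snd s k}" for T
  have finite_windows: "finite (windows a)" for a
    unfolding windows_def by (rule finite_subset[of _ "Pow {a..<a+w+D}"]) auto
  have card_windows: "card (windows a) \<le> (w + D) choose D" for a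
    unfolding windows_def by (rule card_subsets_of_window_le)
  have "{s. \<exists>i. D \<le> block_deletions n (snd s) i w}
      \<subseteq> (\<Union>a\<in>{1..n}. \<Union>T\<in>windows a. all_deleted T)"
  proof
    fix s :: "(nat \<Rightarrow> bool) \<times> (nat \<Rightarrow> bool)"
    assume "s \<in> {s. \<exists>i. D \<le> block_deletions n (snd s) i w}"
    then obtain i where "D \<le> block_deletions n (snd s) i w" by blast
    from block_deletions_imp_deleted_window[OF this assms(1)] obtain a T
      where "a \<in> {1..n}" "T \<in> windows a" "\<forall>k\<in>T. snd s k"
      unfolding windows_def by blast
    then show "s \<in> (\<Union>a\<in>{1..n}. \<Union>T\<in>windows a. all_deleted T)"
      unfolding all_deleted_def by blast
  qed
  then have "measure_pmf.prob (trace_pmf p \<delta> n) {s. \<exists>i. D \<le> block_deletions n (snd s) i w}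
      \<le> measure_pmf.prob (trace_pmf p \<delta> n) (\<Union>a\<in>{1..n}. \<Union>T\<in>windows a. all_deleted T)"
    by (intro measure_pmf.finite_measure_mono) auto
  also have "\<dots> \<le> (\<Sum>a\<in>{1..n}. measure_pmf.prob (trace_pmf p \<delta> n) (\<Union>T\<in>windows a. all_deleted T))"
    by (rule measure_pmf.finite_measure_subadditive_finite) auto
  also have "\<dots> \<le> (\<Sum>a\<in>{1..n}. \<Sum>T\<in>windows a. measure_pmf.prob (trace_pmf p \<delta> n) (all_deleted T))"
    by (intro sum_mono measure_pmf.finite_measure_subadditive_finite finite_windows) auto
  also have "\<dots> = (\<Sum>a\<in>{1..n}. \<Sum>T\<in>windows a. \<delta> ^ D)"
  proof (intro sum.cong refl)
    fix a T assume "T \<in> windows a"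
    then show "measure_pmf.prob (trace_pmf p \<delta> n) (all_deleted T) = \<delta> ^ D"
      using prob_trace_pmf_all_deleted[of T n \<delta> p] assms(2,3)
      unfolding windows_def all_deleted_def by simp
  qed
  also have "\<dots> \<le> (\<Sum>a\<in>{1..n}. real ((w + D) choose D) * \<delta> ^ D)"
    using card_windows assms(2) by (intro sum_mono) (simp add: mult_right_mono)
  also have "\<dots> = real n * real ((w + D) choose D) * \<delta> ^ D" by simp
  finally show ?thesis .
qed

lemma prob_Pi_pmf_ex_le:
  assumes "finite I"
  shows "measure_pmf.prob (Pi_pmf I dflt (\<lambda>_. q)) {\<omega>. \<exists>x\<in>I. \<omega> x \<in> A}
           \<le> real (card I) * measure_pmf.prob q A"
proof -
  let ?P = "Pi_pmf I dflt (\<lambda>_. q)"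
  have component: "measure_pmf.prob ?P ((\<lambda>\<omega>. \<omega> x) -` A) = measure_pmf.prob q A" if "x \<in> I" for x
  proof -
    have "map_pmf (\<lambda>\<omega>. \<omega> x) ?P = q" using Pi_pmf_component[OF assms, of x dflt "\<lambda>_. q"] that by simp
    then show ?thesis unfolding measure_map_pmf[symmetric] by simp
  qed
  have "{\<omega>. \<exists>x\<in>I. \<omega> x \<in> A} = (\<Union>x\<in>I. (\<lambda>\<omega>. \<omega> x) -` A)" by auto
  then have "measure_pmf.prob ?P {\<omega>. \<exists>x\<in>I. \<omega> x \<in> A}
      \<le> (\<Sum>x\<in>I. measure_pmf.prob ?P ((\<lambda>\<omega>. \<omega> x) -` A))"
    using measure_pmf.finite_measure_subadditive_finite[OF assms, of "\<lambda>x. (\<lambda>\<omega>. \<omega> x) -` A" ?P]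
    by simp
  also have "\<dots> = real (card I) * measure_pmf.prob q A" using component by simp
  finally show ?thesis .
qed

lemma power_div_fact_le_exp:
  fixes x :: real
  assumes "0 \<le> x"
  shows "x ^ n / fact n \<le> exp x"
proof -
  have series: "(\<lambda>n. x ^ n /\<^sub>R fact n) sums exp x" by (rule exp_converges)
  have "(\<Sum>k\<in>{n}. x ^ k /\<^sub>R fact k) \<le> (\<Sum>k. x ^ k /\<^sub>R fact k)"
    by (rule sum_le_suminf) (use series assms in \<open>auto simp: sums_iff\<close>)
  then show ?thesis using series by (simp add: sums_iff divide_inverse mult.commute)
qed

lemma binomial_le_exp_mult_pow:
  assumes "0 < k"
  shows "real (n choose k) \<le> (exp 1 * n / k) ^ k"
proof -
  have "real (n choose k) * fact k \<le> real n ^ k"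
    using binomial_fact_pow[of n k] by (metis of_nat_fact of_nat_le_iff of_nat_mult of_nat_power)
  then have "real (n choose k) \<le> real n ^ k / fact k" by (simp add: field_simps)
  also have "\<dots> \<le> real n ^ k * exp (real k) / real k ^ k"
  proof -
    have "real k ^ k \<le> exp (real k) * fact k"
      using power_div_fact_le_exp[of "real k" k] by (simp add: field_simps)
    then have "real n ^ k * real k ^ k \<le> real n ^ k * (exp (real k) * fact k)"
      by (rule mult_left_mono) simp
    then show ?thesis using assms by (simp add: field_simps)
  qed
  also have "\<dots> = (exp 1 * n / k) ^ k"
    by (simp add: power_divide power_mult_distrib exp_of_nat_mult[symmetric] field_simps)
  finally show ?thesis .
qed

lemma ln_10_bounds: "1 \<le> ln (10::real)" "ln (10::real) \<le> 5/2"
proof -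
  show "1 \<le> ln (10::real)" using ln_ge_iff[of 10 1] exp_le by simp
  have e: "exp (1::real) \<ge> 27/10" using e_approx_32 by (simp add: abs_if split: if_splits)
  have sqrt_e: "exp (1/2::real) \<ge> 3/2" using exp_ge_add_one_self[of "1/2::real"] by simp
  have "exp (5/2::real) = exp 1 * exp 1 * exp (1/2)" by (simp flip: exp_add)
  also have "\<dots> \<ge> 27/10 * (27/10) * (3/2)" using e sqrt_e by (intro mult_mono) auto
  finally have "exp (5/2::real) \<ge> 10" by simp
  then show "ln (10::real) \<le> 5/2" by (metis ln_exp ln_le_cancel_iff exp_gt_zero zero_less_numeral)
qed

lemma ten_powr_neg_476_le: "(10::real) powr (-4.76) \<le> 2 / 100000"
proof -
  have "((10::real) powr 0.24) ^ 25 = 10 ^ 6" by (simp add: powr_realpow[symmetric] powr_powr)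
  also have "\<dots> \<le> (2::real) ^ 25" by simp
  finally have "(10::real) powr 0.24 \<le> 2" using power_mono_iff[of "(10::real) powr 0.24" 2 25] by simp
  moreover have "(10::real) powr 0.24 = 10 powr (-4.76 + 5)" by simp
  also have "\<dots> = 10 powr (-4.76) * 10 powr 5" by (rule powr_add)
  also have "(10::real) powr 5 = 10 ^ 5" by (simp add: powr_realpow)
  ultimately show ?thesis by simp
qed

lemma mult_exp_neg_antimono:
  fixes c L0 L :: real
  assumes "0 < L0" "1 \<le> c * L0" "L0 \<le> L"
  shows "L * exp (- c * L) \<le> L0 * exp (- c * L0)"
proof -
  have "L / L0 \<le> exp (L / L0 - 1)" using exp_ge_add_one_self[of "L / L0 - 1"] by simp
  also have "L / L0 - 1 \<le> c * (L - L0)"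
  proof -
    have "(L - L0) * 1 \<le> (L - L0) * (c * L0)" using assms by (intro mult_left_mono) auto
    then show ?thesis using assms(1) by (simp add: field_simps)
  qed
  then have "exp (L / L0 - 1) \<le> exp (c * (L - L0))" by simp
  finally have "L \<le> L0 * exp (c * (L - L0))" using assms(1) by (simp add: field_simps)
  then have "L * exp (- c * L) \<le> L0 * exp (c * (L - L0)) * exp (- c * L)"
    by (simp add: mult_right_mono)
  also have "\<dots> = L0 * exp (- c * L0)" by (simp add: mult.assoc algebra_simps flip: exp_add)
  finally show ?thesis .
qed

lemma exp_decay_le_one:
  fixes L :: real
  assumes "7 * ln 10 \<le> L"
  shows "exp 1 * (10003/10) * (L * exp (- (68/100) * L)) \<le> 1"
proof -
  define L0 :: real where "L0 = 7 * ln 10"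
  have L0: "7 \<le> L0" "L0 \<le> 35/2" using ln_10_bounds unfolding L0_def by auto
  have "exp (- (68/100) * L0) = 10 powr (-4.76)" unfolding L0_def powr_def by simp
  then have "L0 * exp (- (68/100) * L0) \<le> 35/2 * (2/100000)"
    using L0 ten_powr_neg_476_le by (intro mult_mono) auto
  moreover have "L * exp (- (68/100) * L) \<le> L0 * exp (- (68/100) * L0)"
    using L0 assms unfolding L0_def by (intro mult_exp_neg_antimono) auto
  ultimately have decay: "L * exp (- (68/100) * L) \<le> 35/2 * (2/100000)" by linarith
  have e: "exp 1 * (10003/10) \<le> (272/100) * (10003/10::real)" using e_less_272 by simp
  have "0 \<le> L" using L0 assms unfolding L0_def by linarith
  then have "exp 1 * (10003/10) * (L * exp (- (68/100) * L))
      \<le> (272/100) * (10003/10) * (35/2 * (2/100000))"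
    by (intro mult_mono[OF e decay]) auto
  also have "\<dots> \<le> 1" by simp
  finally show ?thesis .
qed

lemma window_ratio_le:
  fixes l L W D :: real
  assumes L: "7 \<le> L" and l: "2/3 \<le> l" and W: "0 \<le> W" "W \<le> 10000 * l + 1"
    and D: "10 * l / L \<le> D"
  shows "(W + D) / D \<le> (10003/10) * L"
proof -
  have bound_pos: "0 < 10 * l / L" using l L by simp
  then have D_pos: "0 < D" using D by linarith
  have "W / D \<le> W / (10 * l / L)"
    by (rule divide_left_mono[OF D W(1) mult_pos_pos[OF D_pos bound_pos]])
  also have "\<dots> = W * L / (10 * l)" using l L by (simp add: field_simps)
  also have "\<dots> \<le> (10000 * l + 1) * L / (10 * l)"
    using W l L by (intro divide_right_mono mult_right_mono) auto
  also have "\<dots> = 1000 * L + L / (10 * l)" using l by (simp add: field_simps)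
  also have "\<dots> \<le> 1000 * L + (15/100) * L" using l L by (simp add: field_simps)
  finally have "W / D \<le> (100015/100) * L" by simp
  moreover have "(W + D) / D = W / D + 1" using D_pos by (simp add: add_divide_distrib)
  ultimately show ?thesis using L by linarith
qed

lemma window_base_le:
  fixes l L W D :: real
  assumes L: "7 * ln 10 \<le> L" and l: "2/3 \<le> l" and W: "0 \<le> W" "W \<le> 10000 * l + 1"
    and D: "10 * l / L \<le> D"
  shows "exp 1 * ((W + D) / D) * exp (- L) \<le> exp (- (32/100) * L)"
proof -
  have "7 \<le> L" using L ln_10_bounds by linarith
  then have "exp 1 * ((W + D) / D) * exp (- L) \<le> exp 1 * ((10003/10) * L) * exp (- L)"
    using window_ratio_le[OF _ l W D] by (intro mult_right_mono mult_left_mono) auto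
  also have "\<dots> = exp 1 * (10003/10) * (L * exp (- (68/100) * L)) * exp (- (32/100) * L)"
    by (simp add: mult.assoc flip: exp_add)
  also have "\<dots> \<le> exp (- (32/100) * L)"
    using exp_decay_le_one[OF L] by (simp add: mult_left_le_one_le)
  finally show ?thesis .
qed

lemma union_bound_le_powr:
  fixes \<delta> :: real and m n w D :: nat
  assumes \<delta>: "0 < \<delta>" "\<delta> \<le> 10 powr -7" and m: "2 \<le> m" "n \<le> m"
    and w: "real w \<le> 10000 * ln m + 1" and D: "10 * ln m / ln (1 / \<delta>) \<le> D"
  shows "real (m ^ 2) * (real n * real ((w + D) choose D) * \<delta> ^ D) \<le> real m powr -0.2"
proof -
  define l L where "l = ln (real m)" and "L = ln (1 / \<delta>)"
  have "ln 2 \<le> l" unfolding l_def using m by simp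
  then have l: "2/3 \<le> l" using ln2_ge_two_thirds by linarith
  have "ln \<delta> \<le> ln (10 powr -7)" using \<delta> by (subst ln_le_cancel_iff) auto
  then have L: "7 * ln 10 \<le> L" unfolding L_def using \<delta> by (simp add: ln_div ln_powr)
  then have L_pos: "0 < L" using ln_10_bounds by linarith
  have \<delta>_eq: "\<delta> = exp (- L)" unfolding L_def using \<delta> by (simp add: ln_div)
  have D_l: "10 * l \<le> L * D" using D L_pos unfolding l_def L_def by (simp add: field_simps)
  then have D_pos: "0 < D" using l by (cases D) auto
  have "real ((w + D) choose D) * \<delta> ^ D \<le> (exp 1 * real (w + D) / real D) ^ D * \<delta> ^ D"
    using binomial_le_exp_mult_pow[OF D_pos, of "w + D"] \<delta> by (intro mult_right_mono) auto
  also have "\<dots> = (exp 1 * ((real w + real D) / real D) * exp (- L)) ^ D"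
    by (simp add: \<delta>_eq power_mult_distrib[symmetric] mult_ac)
  also have "\<dots> \<le> exp (- (32/100) * L) ^ D"
    using window_base_le[OF L l _ w[folded l_def] D[folded l_def L_def]]
    by (intro power_mono) auto
  also have "\<dots> = exp (- (32/100) * (L * D))" by (simp add: exp_of_nat_mult[symmetric] mult_ac)
  also have "\<dots> \<le> exp (- (32/10) * l)" using D_l by simp
  finally have binomial: "real ((w + D) choose D) * \<delta> ^ D \<le> exp (- (32/10) * l)" .
  have "real (m ^ 2) * real n \<le> real m ^ 3" using m by (simp add: power3_eq_cube power2_eq_square)
  also have "\<dots> = real m powr 3" using m by (simp add: powr_realpow)
  also have "\<dots> = exp (3 * l)" unfolding l_def powr_def using m by simp
  finally have powers: "real (m ^ 2) * real n \<le> exp (3 * l)" .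
  have "real (m ^ 2) * (real n * real ((w + D) choose D) * \<delta> ^ D)
      = (real (m ^ 2) * real n) * (real ((w + D) choose D) * \<delta> ^ D)"
    by (simp add: mult_ac)
  also have "\<dots> \<le> exp (3 * l) * exp (- (32/10) * l)"
    using powers binomial \<delta> by (intro mult_mono) auto
  also have "\<dots> = real m powr -0.2" unfolding l_def powr_def using m by (simp flip: exp_add)
  finally show ?thesis .
qed

lemma prob_trace_experiment_block_deletions_ge:
  assumes "1 \<le> D" "0 \<le> \<delta>" "\<delta> \<le> 1"
  shows "measure_pmf.prob (trace_experiment p \<delta> n m w)
           {\<omega>. \<exists>x<m^2. \<exists>i. D \<le> block_deletions n (snd (fst (\<omega> x))) i w}
         \<le> real (m^2) * (real n * real ((w + D) choose D) * \<delta> ^ D)"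
proof -
  let ?trace_and_start = "pair_pmf (trace_pmf p \<delta> n) (pmf_of_set {1..n - 3*w + 1})"
  define bad where
    "bad = {s :: (nat \<Rightarrow> bool) \<times> (nat \<Rightarrow> bool). \<exists>i. D \<le> block_deletions n (snd s) i w}"
  have "measure_pmf.prob ?trace_and_start (fst -` bad) = measure_pmf.prob (trace_pmf p \<delta> n) bad"
    unfolding measure_map_pmf[symmetric] map_fst_pair_pmf ..
  also have "\<dots> \<le> real n * real ((w + D) choose D) * \<delta> ^ D"
    unfolding bad_def using assms by (rule prob_trace_block_deletions_ge)
  finally have trace_bound:
    "measure_pmf.prob ?trace_and_start (fst -` bad) \<le> real n * real ((w + D) choose D) * \<delta> ^ D" .
  have event: "{\<omega>. \<exists>x<m^2. \<exists>i. D \<le> block_deletions n (snd (fst (\<omega> x))) i w}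
      = {\<omega>. \<exists>x\<in>{..<m^2}. \<omega> x \<in> fst -` bad}"
    unfolding bad_def by auto
  have "measure_pmf.prob (trace_experiment p \<delta> n m w)
      {\<omega>. \<exists>x<m^2. \<exists>i. D \<le> block_deletions n (snd (fst (\<omega> x))) i w}
      \<le> real (m^2) * measure_pmf.prob ?trace_and_start (fst -` bad)"
    unfolding event trace_experiment_def
    by (rule prob_Pi_pmf_ex_le[of "{..<m^2}", unfolded card_lessThan]) simp
  also have "\<dots> \<le> real (m^2) * (real n * real ((w + D) choose D) * \<delta> ^ D)"
    using trace_bound by (intro mult_left_mono) auto
  finally show ?thesis .
qed

lemma prob_blocks_within_deletion_bound:
  fixes \<delta> :: real and m n :: nat
  defines "w \<equiv> nat \<lceil>10000 * ln (real m)\<rceil>" and "d \<equiv> 10 * ln (real m) / ln (1 / \<delta>)"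
  assumes \<delta>: "0 < \<delta>" "\<delta> \<le> 10 powr -7" and m: "1 \<le> n" "n < m"
  shows "1 - real m powr -0.2 \<le> measure_pmf.prob (trace_experiment p \<delta> n m w)
           {\<omega>. \<forall>x<m^2. real (block_deletions n (snd (fst (\<omega> x))) (snd (\<omega> x)) w) \<le> d \<and>
                         real (block_deletions n (snd (fst (\<omega> x))) (snd (\<omega> x) + 2 * w) w) \<le> d}"
    (is "_ \<le> measure_pmf.prob ?P ?good")
proof -
  define D where "D = nat \<lfloor>d\<rfloor> + 1"
  have \<delta>_lt_1: "\<delta> < 1" using \<delta> powr_less_one[of "10::real" "-7"] by simp
  have ln_m: "0 \<le> ln (real m)" using m by simp
  have "0 \<le> d" unfolding d_def using ln_m \<delta> \<delta>_lt_1 by simp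
  then have d_le: "d \<le> real D"
    unfolding D_def using real_of_int_floor_add_one_ge[of d] by linarith
  have w_le: "real w \<le> 10000 * ln (real m) + 1"
    unfolding w_def using of_int_ceiling_le_add_one[of "10000 * ln (real m)"] ln_m by linarith
  have below_D: "real k \<le> d" if "k < D" for k
  proof -
    have "int k \<le> \<lfloor>d\<rfloor>" using that \<open>0 \<le> d\<close> unfolding D_def by linarith
    then show ?thesis by (simp add: le_floor_iff)
  qed
  have "UNIV - ?good \<subseteq> {\<omega>. \<exists>x<m^2. \<exists>i. D \<le> block_deletions n (snd (fst (\<omega> x))) i w}"
    by (auto simp: not_le intro!: below_D)
  then have "measure_pmf.prob ?P (UNIV - ?good)
      \<le> measure_pmf.prob ?P {\<omega>. \<exists>x<m^2. \<exists>i. D \<le> block_deletions n (snd (fst (\<omega> x))) i w}"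
    by (intro measure_pmf.finite_measure_mono) auto
  also have "\<dots> \<le> real (m^2) * (real n * real ((w + D) choose D) * \<delta> ^ D)"
    using \<delta> \<delta>_lt_1 by (intro prob_trace_experiment_block_deletions_ge) (auto simp: D_def)
  also have "\<dots> \<le> real m powr -0.2"
    using \<delta> m w_le d_le unfolding d_def by (intro union_bound_le_powr) auto
  finally show ?thesis using measure_pmf.prob_compl[of ?good ?P] by simp
qed

theorem lemma10:
  "\<exists>C::real. \<forall>(\<delta>::real) (m::nat) (n::nat) (p::nat \<Rightarrow> real).
     0 < \<delta> \<and> \<delta> \<le> 10 powr (-7) \<and> 1 \<le> n \<and> n < m \<and>
     (\<forall>k\<in>{1..n}. 0 \<le> p k \<and> p k \<le> 1) \<and>
     3 * nat \<lceil>10000 * ln (real m)\<rceil> \<le> n \<longrightarrow>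
     (let w = nat \<lceil>10000 * ln (real m)\<rceil>;
          d = 10 * ln (real m) / ln (1 / \<delta>)
      in measure_pmf.prob (trace_experiment p \<delta> n m w)
           {\<omega>. \<forall>x<m^2. real (block_deletions n (snd (fst (\<omega> x))) (snd (\<omega> x)) w) \<le> d \<and>
                         real (block_deletions n (snd (fst (\<omega> x))) (snd (\<omega> x) + 2 * w) w) \<le> d}
         \<ge> 1 - C * real m powr (-0.2))"
  by (intro exI[of _ 1] allI impI, unfold Let_def mult.left_neutral,
      rule prob_blocks_within_deletion_bound) auto

end
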